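(* A matrix $M\in\mathbb{R}_+^{p\times q}$ with $\operatorname{rank}(M)\ge 2$ is a slack matrix of some polytope if and only if $\{x^TM: x\in\mathbb{R}_+^p\}=\{x^TM: x\in\mathbb{R}^p\}\cap\mathbb{R}_+^q$ (equivalently, $\{Mz: z\in\mathbb{R}_+^q\}=\{Mz: z\in\mathbb{R}^q\}\cap\mathbb{R}_+^p$) and the all-ones vector $\mathbb{1}\in\mathbb{R}^p$ lies in the column span of $M$.
   Context: For a polytope $P\subseteq\mathbb{R}^n$ with $\dim(P)\ge 1$, a slack matrix of $P$ is any matrix $S=[\mathbb{1},V]\cdot[w,-W]^T\in\mathbb{R}^{p\times q}$ (so $S_{ij}=w_j-W_jv_i$, with $v_i$ the $i$th row of $V$ and $W_j$ the $j$th row of $W$), where $V\in\mathbb{R}^{p\times n}$ satisfies $P=\operatorname{conv}(\text{rows of }V)$ and $W\in\mathbb{R}^{q\times n}$, $w\in\mathbb{R}^q$ satisfy $P=\{x\in\mathbb{R}^n: Wx\le w\}$. A matrix is a slack matrix of some polytope if it is a slack matrix of some polytope of dimension at least one. *)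

theory Defs
  imports "Jordan_Normal_Form.Matrix" "Jordan_Normal_Form.DL_Rank"
begin

definition nonneg_vec :: "real vec \<Rightarrow> bool" where
  "nonneg_vec x \<longleftrightarrow> (\<forall>i < dim_vec x. x $ i \<ge> 0)"

definition nonneg_mat :: "real mat \<Rightarrow> bool" where
  "nonneg_mat M \<longleftrightarrow> (\<forall>i < dim_row M. \<forall>j < dim_col M. M $$ (i, j) \<ge> 0)"

definition conv_rows :: "real mat \<Rightarrow> real vec set" where
  "conv_rows V = {x. \<exists>l \<in> carrier_vec (dim_row V). nonneg_vec l \<and> sum_list (list_of_vec l) = 1
                      \<and> x = transpose_mat V *\<^sub>v l}"

definition polyhedron :: "real mat \<Rightarrow> real vec \<Rightarrow> real vec set" where
  "polyhedron W w = {x \<in> carrier_vec (dim_col W). \<forall>j < dim_row W. row W j \<bullet> x \<le> w $ j}"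

text \<open>dim(P) >= 1 for a nonempty convex set P: P is not a single point.\<close>
definition dim_ge_1 :: "real vec set \<Rightarrow> bool" where
  "dim_ge_1 P \<longleftrightarrow> (\<exists>x \<in> P. \<exists>y \<in> P. x \<noteq> y)"

text \<open>S is a slack matrix of some polytope of dimension at least one:
  S = [1,V][w,-W]^T, i.e. S_ij = w_j - W_j v_i, where P = conv(rows V) = {x. W x <= w}.\<close>
definition is_slack_matrix :: "real mat \<Rightarrow> bool" where
  "is_slack_matrix S \<longleftrightarrow>
     (\<exists>n V W w. V \<in> carrier_mat (dim_row S) n \<and> W \<in> carrier_mat (dim_col S) n
        \<and> w \<in> carrier_vec (dim_col S)
        \<and> conv_rows V = polyhedron W w
        \<and> dim_ge_1 (conv_rows V)
        \<and> S = mat (dim_row S) (dim_col S) (\<lambda>(i, j). w $ j - row W j \<bullet> row V i))"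

end

theory Submission
  imports Defs
begin

text \<open>
  Let \<open>P = conv {v\<^sub>i} = {x. W x \<le> w}\<close> have dimension at least one and slack matrix \<open>S\<close>.
  No \<open>x\<close> satisfies \<open>W x \<ge> w\<close> (it would collapse the bounded \<open>P\<close> to a point), so by Farkas' lemma
  \<open>\<one>\<close> is a nonnegative combination of the columns of \<open>S\<close>. A combination \<open>y\<^sup>T S \<ge> 0\<close> of rows
  is, after rescaling, the slack vector of a point of \<open>P\<close>, hence a convex combination of the rows;
  a combination \<open>S z \<ge> 0\<close> of columns is an affine function nonnegative on \<open>P\<close>, which the affine
  Farkas lemma writes as a nonnegative combination of the facet slacks plus a multiple of \<open>\<one>\<close>.

  Conversely, factor \<open>M - \<one> m\<^sub>0\<^sup>T = C D\<close> with \<open>C\<close>, \<open>D\<close> of full rank. Then \<open>M\<close> is the slack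
  matrix of \<open>P = conv (rows of C)\<close> with respect to \<open>Q = {x. m\<^sub>0 + D\<^sup>T x \<ge> 0}\<close>, provided the two
  sets agree; \<open>P \<subseteq> Q\<close> because \<open>M \<ge> 0\<close>. Let \<open>x \<in> Q\<close> and write \<open>x\<close> as an affine combination of
  rows of \<open>C\<close>; the same coefficients combine the rows of \<open>M\<close> to the slack vector of \<open>x\<close>, which is
  nonnegative. The row condition gives nonnegative coefficients with the same combination, and
  since \<open>\<one>\<close> lies in the column span they still sum to one and still produce \<open>x\<close>. Under the column
  condition instead, a hyperplane separating \<open>x \<notin> P\<close> from \<open>P\<close> pulls back to a nonnegative
  combination of columns of \<open>M\<close> that is negative at \<open>x\<close>. Rank at least two makes \<open>P\<close> more than a point.
\<close>

section \<open>Farkas' lemma by Fourier--Motzkin elimination\<close>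

lemma finite_bounds_separated:
  fixes L U :: "'a \<Rightarrow> real"
  assumes "finite A" "finite B" "\<And>a b. a \<in> A \<Longrightarrow> b \<in> B \<Longrightarrow> L a \<le> U b"
  shows "\<exists>c. (\<forall>a\<in>A. L a \<le> c) \<and> (\<forall>b\<in>B. c \<le> U b)"
proof (cases "A = {}")
  case True
  then show ?thesis
    using assms(2) by (intro exI[of _ "if B = {} then 0 else Min (U ` B)"]) auto
next
  case False
  then have "Max (L ` A) \<in> L ` A"
    using assms(1) by simp
  then have "Max (L ` A) \<le> U b" if "b \<in> B" for b
    using assms(3) that by auto
  moreover have "L a \<le> Max (L ` A)" if "a \<in> A" for a
    using assms(1) that by simp
  ultimately show ?thesis by blast
qed

text \<open>
  Eliminating the last variable keeps the rows with coefficient zero (\<open>Keep\<close>) and adds a positive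
  combination of every pair of rows with coefficients of opposite signs (\<open>Comb\<close>). Indexing rows by
  this datatype lets the induction on the number of variables keep a single index type.
\<close>

datatype fm_index = Row nat | Keep fm_index | Comb fm_index fm_index

definition fm_rows :: "fm_index set \<Rightarrow> (fm_index \<Rightarrow> nat \<Rightarrow> real) \<Rightarrow> nat \<Rightarrow> fm_index set" where
  "fm_rows I G n = Keep ` {i \<in> I. G i n = 0}
     \<union> (\<lambda>(s, t). Comb s t) ` ({s \<in> I. 0 < G s n} \<times> {t \<in> I. G t n < 0})"

definition fm_comb :: "(fm_index \<Rightarrow> nat \<Rightarrow> real) \<Rightarrow> nat \<Rightarrow> (fm_index \<Rightarrow> real) \<Rightarrow> fm_index \<Rightarrow> real" where
  "fm_comb G n \<phi> k = (case k of Keep i \<Rightarrow> \<phi> i | Comb s t \<Rightarrow> - G t n * \<phi> s + G s n * \<phi> t | Row _ \<Rightarrow> 0)"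

definition fm_pullback ::
  "fm_index set \<Rightarrow> (fm_index \<Rightarrow> nat \<Rightarrow> real) \<Rightarrow> nat \<Rightarrow> (fm_index \<Rightarrow> real) \<Rightarrow> fm_index \<Rightarrow> real" where
  "fm_pullback I G n \<mu> i =
     (if G i n = 0 then \<mu> (Keep i) else 0)
     + (if 0 < G i n then \<Sum>t \<in> {t \<in> I. G t n < 0}. \<mu> (Comb i t) * - G t n else 0)
     + (if G i n < 0 then \<Sum>s \<in> {s \<in> I. 0 < G s n}. \<mu> (Comb s i) * G s n else 0)"

lemma fm_comb_sum:
  "fm_comb G n (\<lambda>i. \<Sum>l\<in>L. G i l * y l) k = (\<Sum>l\<in>L. fm_comb G n (\<lambda>i. G i l) k * y l)"
  by (cases k) (simp_all add: fm_comb_def sum_distrib_left sum.distrib[symmetric] algebra_simps)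

lemma fm_comb_last_column:
  assumes "k \<in> fm_rows I G n"
  shows "fm_comb G n (\<lambda>i. G i n) k = 0"
  using assms by (auto simp: fm_rows_def fm_comb_def)

lemma fm_feasible_lift:
  assumes I: "finite I"
    and y: "\<forall>k\<in>fm_rows I G n. fm_comb G n h k \<le> (\<Sum>l<n. fm_comb G n (\<lambda>i. G i l) k * y l)"
  shows "\<exists>y'. \<forall>i\<in>I. h i \<le> (\<Sum>l<Suc n. G i l * y' l)"
proof -
  define a where "a i = (\<Sum>l<n. G i l * y l)" for i
  have a: "fm_comb G n h k \<le> fm_comb G n a k" if "k \<in> fm_rows I G n" for k
    using y that unfolding a_def fm_comb_sum by blast
  have zero: "h i \<le> a i" if "i \<in> I" "G i n = 0" for i
    using a[of "Keep i"] that by (auto simp: fm_rows_def fm_comb_def)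
  have "(h s - a s) / G s n \<le> (h t - a t) / G t n"
    if "s \<in> I" "0 < G s n" "t \<in> I" "G t n < 0" for s t
  proof -
    have "- G t n * h s + G s n * h t \<le> - G t n * a s + G s n * a t"
      using a[of "Comb s t"] that by (auto simp: fm_rows_def fm_comb_def)
    then show ?thesis
      using that by (simp add: divide_simps) (simp add: algebra_simps)
  qed
  then obtain c where
    c: "\<forall>s\<in>{s\<in>I. 0 < G s n}. (h s - a s) / G s n \<le> c" "\<forall>t\<in>{t\<in>I. G t n < 0}. c \<le> (h t - a t) / G t n"
    using finite_bounds_separated[of "{s\<in>I. 0 < G s n}" "{t\<in>I. G t n < 0}"
        "\<lambda>s. (h s - a s) / G s n" "\<lambda>t. (h t - a t) / G t n"] I by auto
  have "h i \<le> (\<Sum>l<Suc n. G i l * (y(n := c)) l)" if "i \<in> I" for i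
  proof -
    have "(\<Sum>l<Suc n. G i l * (y(n := c)) l) = a i + G i n * c"
      by (simp add: a_def)
    moreover consider "G i n = 0" | "0 < G i n" | "G i n < 0" by linarith
    then have "h i \<le> a i + G i n * c"
      by cases (use zero c that in \<open>auto simp: divide_simps mult.commute\<close>)
    ultimately show ?thesis by simp
  qed
  then show ?thesis by blast
qed

lemma fm_pullback_nonneg:
  assumes \<mu>: "\<forall>k\<in>fm_rows I G n. 0 \<le> \<mu> k" and i: "i \<in> I"
  shows "0 \<le> fm_pullback I G n \<mu> i"
proof -
  have comb: "0 \<le> \<mu> (Comb s t)" if "s \<in> I" "0 < G s n" "t \<in> I" "G t n < 0" for s t
    using \<mu> that unfolding fm_rows_def by blast
  show ?thesis
    using \<mu> i comb unfolding fm_pullback_def fm_rows_def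
    by (intro add_nonneg_nonneg) (auto intro!: sum_nonneg mult_nonneg_nonneg mult_nonneg_nonpos)
qed

lemma fm_pullback_sum:
  assumes "finite I"
  shows "(\<Sum>i\<in>I. fm_pullback I G n \<mu> i * \<phi> i) = (\<Sum>k\<in>fm_rows I G n. \<mu> k * fm_comb G n \<phi> k)"
proof -
  define Tp Tm where "Tp = {s \<in> I. 0 < G s n}" and "Tm = {t \<in> I. G t n < 0}"
  have fin: "finite Tp" "finite Tm"
    using assms by (auto simp: Tp_def Tm_def)
  have filter_sums:
      "sum f {i \<in> I. G i n = 0} = (\<Sum>i\<in>I. if G i n = 0 then f i else 0)"
      "sum f Tp = (\<Sum>i\<in>I. if 0 < G i n then f i else 0)"
      "sum f Tm = (\<Sum>i\<in>I. if G i n < 0 then f i else 0)" for f :: "fm_index \<Rightarrow> real"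
    using assms by (simp_all add: Tp_def Tm_def sum.inter_filter)
  have ite: "(if P then a else 0) * b = (if P then a * b else 0)" for P and a b :: real
    by simp
  have "(\<Sum>k\<in>fm_rows I G n. \<mu> k * fm_comb G n \<phi> k)
      = (\<Sum>i\<in>{i \<in> I. G i n = 0}. \<mu> (Keep i) * \<phi> i)
        + (\<Sum>(s, t)\<in>Tp \<times> Tm. \<mu> (Comb s t) * (- G t n * \<phi> s + G s n * \<phi> t))"
    unfolding fm_rows_def Tp_def[symmetric] Tm_def[symmetric] using assms fin
    by (subst sum.union_disjoint) (auto simp: sum.reindex inj_on_def fm_comb_def intro!: sum.cong)
  also have "(\<Sum>(s, t)\<in>Tp \<times> Tm. \<mu> (Comb s t) * (- G t n * \<phi> s + G s n * \<phi> t))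
      = (\<Sum>(s, t)\<in>Tp \<times> Tm. \<mu> (Comb s t) * - G t n * \<phi> s)
        + (\<Sum>(s, t)\<in>Tp \<times> Tm. \<mu> (Comb s t) * G s n * \<phi> t)"
    by (simp add: sum.distrib[symmetric] split_def algebra_simps)
  also have "\<dots> = (\<Sum>s\<in>Tp. (\<Sum>t\<in>Tm. \<mu> (Comb s t) * - G t n) * \<phi> s)
        + (\<Sum>t\<in>Tm. (\<Sum>s\<in>Tp. \<mu> (Comb s t) * G s n) * \<phi> t)"
    by (simp add: sum.cartesian_product[symmetric] sum_distrib_right sum.swap[of _ Tm])
  also have "(\<Sum>i\<in>{i \<in> I. G i n = 0}. \<mu> (Keep i) * \<phi> i) + \<dots> = (\<Sum>i\<in>I. fm_pullback I G n \<mu> i * \<phi> i)"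
    unfolding fm_pullback_def Tp_def[symmetric] Tm_def[symmetric]
    by (simp add: filter_sums sum.distrib distrib_right ite add.assoc cong: if_cong)
  finally show ?thesis ..
qed

lemma farkas_fm_index:
  fixes G :: "fm_index \<Rightarrow> nat \<Rightarrow> real" and h :: "fm_index \<Rightarrow> real"
  assumes "finite I" "\<not> (\<exists>y. \<forall>i\<in>I. h i \<le> (\<Sum>l<n. G i l * y l))"
  shows "\<exists>\<mu>. (\<forall>i\<in>I. 0 \<le> \<mu> i) \<and> (\<forall>l<n. (\<Sum>i\<in>I. \<mu> i * G i l) = 0) \<and> 0 < (\<Sum>i\<in>I. \<mu> i * h i)"
  using assms
proof (induction n arbitrary: I G h)
  case 0
  then obtain i0 where "i0 \<in> I" "0 < h i0"
    by force
  then show ?case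
    using "0.prems"(1) by (intro exI[of _ "\<lambda>i. of_bool (i = i0)"]) simp
next
  case (Suc n)
  define I' G' h' where "I' = fm_rows I G n" and "G' k l = fm_comb G n (\<lambda>i. G i l) k"
    and "h' = fm_comb G n h" for k l
  have "finite I'"
    using Suc.prems(1) by (simp add: I'_def fm_rows_def)
  moreover have "\<not> (\<exists>y. \<forall>k\<in>I'. h' k \<le> (\<Sum>l<n. G' k l * y l))"
    using fm_feasible_lift[of I G n h] Suc.prems unfolding I'_def G'_def h'_def by blast
  ultimately obtain \<mu>' where \<mu>': "\<forall>k\<in>I'. 0 \<le> \<mu>' k" "\<forall>l<n. (\<Sum>k\<in>I'. \<mu>' k * G' k l) = 0"
    "0 < (\<Sum>k\<in>I'. \<mu>' k * h' k)"
    using Suc.IH by blast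
  define \<mu> where "\<mu> = fm_pullback I G n \<mu>'"
  have pullback: "(\<Sum>i\<in>I. \<mu> i * \<phi> i) = (\<Sum>k\<in>I'. \<mu>' k * fm_comb G n \<phi> k)" for \<phi>
    unfolding \<mu>_def I'_def using Suc.prems(1) by (rule fm_pullback_sum)
  have "\<forall>i\<in>I. 0 \<le> \<mu> i"
    using fm_pullback_nonneg \<mu>'(1) unfolding \<mu>_def I'_def by blast
  moreover have "(\<Sum>i\<in>I. \<mu> i * G i l) = 0" if "l < Suc n" for l
  proof (cases "l = n")
    case True
    then show ?thesis
      using pullback[of "\<lambda>i. G i n"] fm_comb_last_column by (simp add: I'_def)
  next
    case False
    then show ?thesis
      using pullback[of "\<lambda>i. G i l"] \<mu>'(2) that by (simp add: G'_def)
  qed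
  moreover have "0 < (\<Sum>i\<in>I. \<mu> i * h i)"
    using pullback[of h] \<mu>'(3) by (simp add: h'_def)
  ultimately show ?case by blast
qed

lemma farkas_lemma:
  fixes G :: "nat \<Rightarrow> nat \<Rightarrow> real" and h :: "nat \<Rightarrow> real"
  assumes "\<not> (\<exists>y. \<forall>j<m. h j \<le> (\<Sum>l<n. G j l * y l))"
  shows "\<exists>\<mu>. (\<forall>j<m. 0 \<le> \<mu> j) \<and> (\<forall>l<n. (\<Sum>j<m. \<mu> j * G j l) = 0) \<and> 0 < (\<Sum>j<m. \<mu> j * h j)"
proof -
  define G' h' where "G' k = (case k of Row j \<Rightarrow> G j | _ \<Rightarrow> (\<lambda>_. 0))"
    and "h' k = (case k of Row j \<Rightarrow> h j | _ \<Rightarrow> 0)" for k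
  have row_sum: "(\<Sum>k\<in>Row ` {..<m}. f k) = (\<Sum>j<m. f (Row j))" for f :: "fm_index \<Rightarrow> real"
    by (simp add: sum.reindex inj_on_def)
  have "\<not> (\<exists>y. \<forall>k\<in>Row ` {..<m}. h' k \<le> (\<Sum>l<n. G' k l * y l))"
    using assms by (auto simp: G'_def h'_def)
  then obtain \<mu> where "\<forall>k\<in>Row ` {..<m}. 0 \<le> \<mu> k"
    "\<forall>l<n. (\<Sum>k\<in>Row ` {..<m}. \<mu> k * G' k l) = 0" "0 < (\<Sum>k\<in>Row ` {..<m}. \<mu> k * h' k)"
    using farkas_fm_index[of "Row ` {..<m}" h' G' n] by auto
  then show ?thesis
    by (intro exI[of _ "\<lambda>j. \<mu> (Row j)"]) (simp add: row_sum G'_def h'_def)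
qed

lemma homogeneous_farkas:
  fixes G :: "nat \<Rightarrow> nat \<Rightarrow> real"
  assumes "\<And>y. \<forall>j<m. 0 \<le> (\<Sum>l<n. G j l * y l) \<Longrightarrow> (\<Sum>l<n. a l * y l) \<le> 0"
  shows "\<exists>\<mu>. (\<forall>j<m. 0 \<le> \<mu> j) \<and> (\<forall>l<n. (\<Sum>j<m. \<mu> j * G j l) = - a l)"
proof -
  define G' where "G' j l = (if j < m then G j l else a l)" for j l
  have "\<not> (\<exists>y. \<forall>j<Suc m. of_bool (j = m) \<le> (\<Sum>l<n. G' j l * y l))"
  proof
    assume "\<exists>y. \<forall>j<Suc m. of_bool (j = m) \<le> (\<Sum>l<n. G' j l * y l)"
    then obtain y where y: "\<forall>j<Suc m. of_bool (j = m) \<le> (\<Sum>l<n. G' j l * y l)" ..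
    have "0 \<le> (\<Sum>l<n. G j l * y l)" if "j < m" for j
      using y[rule_format, of j] that by (simp add: G'_def)
    moreover have "1 \<le> (\<Sum>l<n. a l * y l)"
      using y[rule_format, of m] by (simp add: G'_def)
    ultimately show False
      using assms[of y] by simp
  qed
  then obtain \<mu> where \<mu>: "\<forall>j<Suc m. 0 \<le> \<mu> j" "\<forall>l<n. (\<Sum>j<Suc m. \<mu> j * G' j l) = 0"
    "0 < (\<Sum>j<Suc m. \<mu> j * of_bool (j = m))"
    using farkas_lemma[where G=G' and h="\<lambda>j. of_bool (j = m)" and m="Suc m" and n=n] by blast
  have pos: "0 < \<mu> m"
    using \<mu>(3) by simp
  have "(\<Sum>j<m. \<mu> j / \<mu> m * G j l) = - a l" if "l < n" for l
  proof -
    have "(\<Sum>j<m. \<mu> j * G j l) + \<mu> m * a l = 0"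
      using \<mu>(2) that by (simp add: G'_def)
    then have "(\<Sum>j<m. \<mu> j * G j l) = - (\<mu> m * a l)"
      by linarith
    then show ?thesis
      using pos by (simp add: sum_divide_distrib[symmetric])
  qed
  then show ?thesis
    using \<mu>(1) pos by (intro exI[of _ "\<lambda>j. \<mu> j / \<mu> m"]) simp
qed

section \<open>Convex hulls and polyhedra\<close>

text \<open>
  A point of \<open>\<real>\<^sup>n\<close> is a function \<open>nat \<Rightarrow> real\<close> read on \<open>{..<n}\<close>, and a \<open>p \<times> n\<close> matrix a function
  \<open>nat \<Rightarrow> nat \<Rightarrow> real\<close>.
\<close>

definition in_conv_rows :: "nat \<Rightarrow> nat \<Rightarrow> (nat \<Rightarrow> nat \<Rightarrow> real) \<Rightarrow> (nat \<Rightarrow> real) \<Rightarrow> bool" where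
  "in_conv_rows p n v x \<longleftrightarrow> (\<exists>c. (\<forall>i<p. 0 \<le> c i) \<and> (\<Sum>i<p. c i) = 1 \<and> (\<forall>l<n. x l = (\<Sum>i<p. c i * v i l)))"

definition in_polyhedron ::
  "nat \<Rightarrow> nat \<Rightarrow> (nat \<Rightarrow> nat \<Rightarrow> real) \<Rightarrow> (nat \<Rightarrow> real) \<Rightarrow> (nat \<Rightarrow> real) \<Rightarrow> bool" where
  "in_polyhedron q n W w x \<longleftrightarrow> (\<forall>j<q. (\<Sum>l<n. W j l * x l) \<le> w j)"

lemma sum_lessThan_Suc_if_last:
  "(\<Sum>l<Suc n. (if l < n then a l else b) * y l) = (\<Sum>l<n. a l * y l) + b * (y n :: real)"
  by simp

lemma in_conv_rows_row:
  assumes "i < p"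
  shows "in_conv_rows p n v (v i)"
  unfolding in_conv_rows_def using assms
  by (intro exI[of _ "\<lambda>i'. of_bool (i' = i)"]) auto

lemma in_conv_rows_linear_le:
  assumes "in_conv_rows p n v x" "\<forall>i<p. (\<Sum>l<n. g l * v i l) \<le> c"
  shows "(\<Sum>l<n. g l * x l) \<le> c"
proof -
  obtain a where a: "\<forall>i<p. 0 \<le> a i" "(\<Sum>i<p. a i) = 1" "\<forall>l<n. x l = (\<Sum>i<p. a i * v i l)"
    using assms(1) unfolding in_conv_rows_def by blast
  have "(\<Sum>l<n. g l * x l) = (\<Sum>i<p. a i * (\<Sum>l<n. g l * v i l))"
    using a(3) by (simp add: sum_distrib_left algebra_simps) (rule sum.swap)
  also have "\<dots> \<le> (\<Sum>i<p. a i * c)"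
    using a(1) assms(2) by (intro sum_mono mult_left_mono) auto
  also have "\<dots> = c"
    using a(2) by (simp add: sum_distrib_right[symmetric])
  finally show ?thesis .
qed

lemma in_conv_rows_abs_le:
  assumes "in_conv_rows p n v x" "l < n"
  shows "\<bar>x l\<bar> \<le> (\<Sum>i<p. \<bar>v i l\<bar>)"
proof -
  obtain a where a: "\<forall>i<p. 0 \<le> a i" "(\<Sum>i<p. a i) = 1" "\<forall>l<n. x l = (\<Sum>i<p. a i * v i l)"
    using assms(1) unfolding in_conv_rows_def by blast
  have "a i \<le> 1" if "i < p" for i
    using a(1,2) that member_le_sum[of i "{..<p}" a] by simp
  then have "\<bar>a i * v i l\<bar> \<le> \<bar>v i l\<bar>" if "i < p" for i
    using a(1) that by (simp add: abs_mult mult_left_le_one_le)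
  then have "(\<Sum>i<p. \<bar>a i * v i l\<bar>) \<le> (\<Sum>i<p. \<bar>v i l\<bar>)"
    by (intro sum_mono) simp
  then have "\<bar>\<Sum>i<p. a i * v i l\<bar> \<le> (\<Sum>i<p. \<bar>v i l\<bar>)"
    using sum_abs[of "\<lambda>i. a i * v i l" "{..<p}"] by linarith
  then show ?thesis
    using a(3) assms(2) by simp
qed

lemma separate_point_from_conv_rows:
  assumes "\<not> in_conv_rows p n v x"
  shows "\<exists>y c. (\<forall>i<p. (\<Sum>l<n. v i l * y l) \<le> c) \<and> c < (\<Sum>l<n. x l * y l)"
proof (rule ccontr)
  assume no_separation: "\<not> ?thesis"
  define G a where "G i l = (if l < n then - v i l else 1)" and "a l = (if l < n then x l else -1)"
    for i l
  have "(\<Sum>l<Suc n. a l * y l) \<le> 0" if "\<forall>i<p. 0 \<le> (\<Sum>l<Suc n. G i l * y l)" for y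
    using that no_separation unfolding G_def a_def sum_lessThan_Suc_if_last
    by (auto simp: sum_negf not_less)
  from homogeneous_farkas[where m=p and n="Suc n" and G=G and a=a, OF this]
  obtain \<mu> where \<mu>: "\<forall>i<p. 0 \<le> \<mu> i" "\<forall>l<Suc n. (\<Sum>i<p. \<mu> i * G i l) = - a l"
    by blast
  have "x l = (\<Sum>i<p. \<mu> i * v i l)" if "l < n" for l
    using \<mu>(2)[rule_format, of l] that by (simp add: G_def a_def sum_negf)
  moreover have "(\<Sum>i<p. \<mu> i) = 1"
    using \<mu>(2)[rule_format, of n] by (simp add: G_def a_def)
  ultimately have "in_conv_rows p n v x"
    unfolding in_conv_rows_def using \<mu>(1) by blast
  then show False
    using assms by blast
qed

lemma valid_inequality_on_recession_cone:
  assumes feasible: "in_polyhedron q n W w x0"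
    and valid: "\<And>x. in_polyhedron q n W w x \<Longrightarrow> (\<Sum>l<n. g l * x l) \<le> c"
    and y: "\<forall>j<q. (\<Sum>l<n. W j l * y l) \<le> 0"
  shows "(\<Sum>l<n. g l * y l) \<le> 0"
proof (rule ccontr)
  assume "\<not> ?thesis"
  then have gy: "0 < (\<Sum>l<n. g l * y l)"
    by simp
  define s where "s = (c - (\<Sum>l<n. g l * x0 l) + 1) / (\<Sum>l<n. g l * y l)"
  have "0 \<le> c - (\<Sum>l<n. g l * x0 l)"
    using valid[OF feasible] by simp
  then have s: "0 \<le> s"
    using gy by (simp add: s_def)
  have "in_polyhedron q n W w (\<lambda>l. x0 l + s * y l)"
    unfolding in_polyhedron_def
  proof (intro allI impI)
    fix j assume "j < q"
    have "(\<Sum>l<n. W j l * (x0 l + s * y l)) = (\<Sum>l<n. W j l * x0 l) + s * (\<Sum>l<n. W j l * y l)"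
      by (simp add: algebra_simps sum.distrib sum_distrib_left)
    also have "\<dots> \<le> w j + s * 0"
      using feasible y s \<open>j < q\<close> unfolding in_polyhedron_def
      by (intro add_mono mult_left_mono) auto
    finally show "(\<Sum>l<n. W j l * (x0 l + s * y l)) \<le> w j" by simp
  qed
  moreover have "(\<Sum>l<n. g l * (x0 l + s * y l)) = (\<Sum>l<n. g l * x0 l) + s * (\<Sum>l<n. g l * y l)"
    by (simp add: algebra_simps sum.distrib sum_distrib_left)
  then have "(\<Sum>l<n. g l * (x0 l + s * y l)) = c + 1"
    using gy by (simp add: s_def)
  ultimately show False
    using valid by fastforce
qed

lemma valid_inequality_homogenized:
  assumes feasible: "in_polyhedron q n W w x0"
    and valid: "\<And>x. in_polyhedron q n W w x \<Longrightarrow> (\<Sum>l<n. g l * x l) \<le> c"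
    and y: "\<forall>j<q. (\<Sum>l<n. W j l * y l) \<le> w j * t" and t: "0 \<le> t"
  shows "(\<Sum>l<n. g l * y l) \<le> c * t"
proof (cases "t = 0")
  case True
  then show ?thesis
    using valid_inequality_on_recession_cone[OF feasible valid] y by simp
next
  case False
  then have t: "0 < t"
    using t by simp
  have "in_polyhedron q n W w (\<lambda>l. y l / t)"
    using y t unfolding in_polyhedron_def
    by (simp add: sum_divide_distrib[symmetric] pos_divide_le_eq)
  then have "(\<Sum>l<n. g l * (y l / t)) \<le> c"
    by (rule valid)
  then have "(\<Sum>l<n. g l * y l) / t \<le> c"
    by (simp add: sum_divide_distrib)
  then show ?thesis
    using t by (simp add: pos_divide_le_eq)
qed

lemma affine_farkas:
  assumes feasible: "in_polyhedron q n W w x0"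
    and valid: "\<And>x. in_polyhedron q n W w x \<Longrightarrow> (\<Sum>l<n. g l * x l) \<le> c"
  shows "\<exists>\<mu>. (\<forall>j<q. 0 \<le> \<mu> j) \<and> (\<forall>l<n. (\<Sum>j<q. \<mu> j * W j l) = g l) \<and> (\<Sum>j<q. \<mu> j * w j) \<le> c"
proof -
  define G a where "G j l = (if j < q then (if l < n then - W j l else w j) else of_bool (l = n))"
    and "a l = (if l < n then g l else - c)" for j l
  have "(\<Sum>l<Suc n. a l * y l) \<le> 0" if "\<forall>j<Suc q. 0 \<le> (\<Sum>l<Suc n. G j l * y l)" for y
  proof -
    have "(\<Sum>l<n. W j l * y l) \<le> w j * y n" if "j < q" for j
      using \<open>\<forall>j<Suc q. _\<close>[rule_format, of j] that unfolding G_def by (simp add: sum_negf)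
    moreover have "0 \<le> y n"
      using that[rule_format, of q] unfolding G_def by simp
    ultimately have "(\<Sum>l<n. g l * y l) \<le> c * y n"
      by (intro valid_inequality_homogenized[OF feasible valid]) auto
    then show ?thesis
      unfolding a_def sum_lessThan_Suc_if_last by simp
  qed
  from homogeneous_farkas[where m="Suc q" and n="Suc n" and G=G and a=a, OF this]
  obtain \<mu> where \<mu>: "\<forall>j<Suc q. 0 \<le> \<mu> j" "\<forall>l<Suc n. (\<Sum>j<Suc q. \<mu> j * G j l) = - a l"
    by blast
  have "(\<Sum>j<q. \<mu> j * W j l) = g l" if "l < n" for l
    using \<mu>(2)[rule_format, of l] that by (simp add: G_def a_def sum_negf)
  moreover have "(\<Sum>j<q. \<mu> j * w j) + \<mu> q = c"
    using \<mu>(2)[rule_format, of n] by (simp add: G_def a_def)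
  ultimately show ?thesis
    using \<mu>(1) by (intro exI[of _ \<mu>]) auto
qed

section \<open>Rank factorisation\<close>

definition rows_span :: "nat \<Rightarrow> nat \<Rightarrow> (nat \<Rightarrow> nat \<Rightarrow> real) \<Rightarrow> bool" where
  "rows_span p k C \<longleftrightarrow> (\<forall>t. \<exists>y. \<forall>l<k. (\<Sum>i<p. y i * C i l) = t l)"

lemma rows_span_orthogonal_eq_0:
  assumes "rows_span p k C" "\<forall>i<p. (\<Sum>l<k. C i l * u l) = 0"
  shows "\<forall>l<k. u l = 0"
proof -
  obtain y where y: "\<forall>l<k. (\<Sum>i<p. y i * C i l) = u l"
    using assms(1) unfolding rows_span_def by blast
  have "(\<Sum>l<k. u l * u l) = (\<Sum>l<k. (\<Sum>i<p. y i * C i l) * u l)"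
    using y by simp
  also have "\<dots> = (\<Sum>i<p. y i * (\<Sum>l<k. C i l * u l))"
    by (simp add: sum_distrib_left sum_distrib_right mult.assoc) (rule sum.swap)
  also have "\<dots> = 0"
    using assms(2) by simp
  finally have "(\<Sum>l<k. u l * u l) = 0" .
  then show ?thesis
    by (simp add: sum_nonneg_eq_0_iff)
qed

lemma rows_span_cons_column:
  assumes span: "rows_span p k C" and i0: "i0 < p" "c i0 \<noteq> 0" "\<forall>l<k. C i0 l = 0"
  shows "rows_span p (Suc k) (\<lambda>i l. case l of 0 \<Rightarrow> c i | Suc l' \<Rightarrow> C i l')"
  unfolding rows_span_def
proof
  fix t :: "nat \<Rightarrow> real"
  obtain y where y: "\<forall>l<k. (\<Sum>i<p. y i * C i l) = t (Suc l)"
    using span unfolding rows_span_def by (elim allE[of _ "\<lambda>l. t (Suc l)"]) blast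
  define s where "s = (t 0 - (\<Sum>i<p. y i * c i)) / c i0"
  have shift: "(\<Sum>i<p. (y i + (if i = i0 then s else 0)) * f i) = (\<Sum>i<p. y i * f i) + s * f i0" for f
  proof -
    have "(\<Sum>i<p. (y i + (if i = i0 then s else 0)) * f i)
        = (\<Sum>i<p. y i * f i) + (\<Sum>i<p. if i = i0 then s * f i else 0)"
      unfolding sum.distrib[symmetric] by (rule sum.cong) (auto simp: algebra_simps)
    then show ?thesis
      using i0(1) by simp
  qed
  show "\<exists>y. \<forall>l<Suc k. (\<Sum>i<p. y i * (case l of 0 \<Rightarrow> c i | Suc l' \<Rightarrow> C i l')) = t l"
  proof (intro exI[of _ "\<lambda>i. y i + (if i = i0 then s else 0)"] allI impI)
    fix l assume "l < Suc k"
    then show "(\<Sum>i<p. (y i + (if i = i0 then s else 0)) * (case l of 0 \<Rightarrow> c i | Suc l' \<Rightarrow> C i l')) = t l"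
      using shift y i0 by (cases l) (simp_all add: s_def)
  qed
qed

lemma rank_factorization_pivot_step:
  fixes A :: "nat \<Rightarrow> nat \<Rightarrow> real"
  assumes ij: "i0 < p" "j0 < q" "A i0 j0 \<noteq> 0"
    and fac: "\<forall>i<p. \<forall>j<q. A i j - A i j0 / A i0 j0 * A i0 j = (\<Sum>l<k. C' i l * D' l j)"
    and C': "rows_span p k C'" and D': "rows_span q k (\<lambda>j l. D' l j)"
  shows "\<exists>k C D. (\<forall>i<p. \<forall>j<q. A i j = (\<Sum>l<k. C i l * D l j))
    \<and> rows_span p k C \<and> rows_span q k (\<lambda>j l. D l j)"
proof -
  have "\<forall>j<q. (\<Sum>l<k. D' l j * C' i0 l) = 0"
    using fac ij by (simp add: mult.commute[of "D' _ _"] flip: fac[rule_format])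
  from rows_span_orthogonal_eq_0[OF D' this] have C'0: "\<forall>l<k. C' i0 l = 0" .
  have "\<forall>i<p. (\<Sum>l<k. C' i l * D' l j0) = 0"
    using fac ij by (simp flip: fac[rule_format])
  from rows_span_orthogonal_eq_0[OF C' this] have D'0: "\<forall>l<k. D' l j0 = 0" .
  define C D where "C = (\<lambda>i l. case l of 0 \<Rightarrow> A i j0 / A i0 j0 | Suc l' \<Rightarrow> C' i l')"
    and "D = (\<lambda>l j. case l of 0 \<Rightarrow> A i0 j | Suc l' \<Rightarrow> D' l' j)"
  have "rows_span p (Suc k) C" "rows_span q (Suc k) (\<lambda>j l. D l j)"
    using rows_span_cons_column[OF C' ij(1)] rows_span_cons_column[OF D' ij(2)] ij(3) C'0 D'0
    by (simp_all add: C_def D_def)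
  moreover have "A i j = (\<Sum>l<Suc k. C i l * D l j)" if "i < p" "j < q" for i j
    using fac[rule_format, OF that] unfolding sum.lessThan_Suc_shift
    by (simp add: C_def D_def algebra_simps)
  ultimately show ?thesis
    by (intro exI[of _ "Suc k"] exI[of _ C] exI[of _ D]) simp
qed

lemma rank_factorization:
  fixes A :: "nat \<Rightarrow> nat \<Rightarrow> real"
  shows "\<exists>k C D. (\<forall>i<p. \<forall>j<q. A i j = (\<Sum>l<k. C i l * D l j))
    \<and> rows_span p k C \<and> rows_span q k (\<lambda>j l. D l j)"
proof (induction "card {i. i < p \<and> (\<exists>j<q. A i j \<noteq> 0)}" arbitrary: A rule: less_induct)
  case less
  show ?case
  proof (cases "\<exists>i<p. \<exists>j<q. A i j \<noteq> 0")
    case False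
    then show ?thesis
      by (intro exI[of _ 0]) (simp add: rows_span_def)
  next
    case True
    then obtain i0 j0 where ij: "i0 < p" "j0 < q" "A i0 j0 \<noteq> 0"
      by blast
    define A' where "A' i j = A i j - A i j0 / A i0 j0 * A i0 j" for i j
    have "{i. i < p \<and> (\<exists>j<q. A' i j \<noteq> 0)} \<subseteq> {i. i < p \<and> (\<exists>j<q. A i j \<noteq> 0)} - {i0}"
    proof
      fix i assume "i \<in> {i. i < p \<and> (\<exists>j<q. A' i j \<noteq> 0)}"
      then obtain j where j: "i < p" "j < q" "A' i j \<noteq> 0"
        by blast
      then have "A i j \<noteq> 0 \<or> A i j0 \<noteq> 0" "i \<noteq> i0"
        using ij(3) by (auto simp: A'_def)
      then show "i \<in> {i. i < p \<and> (\<exists>j<q. A i j \<noteq> 0)} - {i0}"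
        using j ij(2) by blast
    qed
    then have "card {i. i < p \<and> (\<exists>j<q. A' i j \<noteq> 0)} \<le> card ({i. i < p \<and> (\<exists>j<q. A i j \<noteq> 0)} - {i0})"
      by (intro card_mono) auto
    also have "\<dots> < card {i. i < p \<and> (\<exists>j<q. A i j \<noteq> 0)}"
      using ij by (intro card_Diff1_less) auto
    finally obtain k C' D' where "\<forall>i<p. \<forall>j<q. A' i j = (\<Sum>l<k. C' i l * D' l j)"
      "rows_span p k C'" "rows_span q k (\<lambda>j l. D' l j)"
      using less.hyps by blast
    then show ?thesis
      using rank_factorization_pivot_step[where A=A, OF ij] unfolding A'_def by blast
  qed
qed

section \<open>The slack matrix of a polytope\<close>

text \<open>The condition \<open>{x\<^sup>T m. x \<ge> 0} = {x\<^sup>T m. x \<in> \<real>\<^sup>p} \<inter> \<real>\<^sup>q\<^sub>+\<close> on the rows of \<open>m\<close>.\<close>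

definition cone_eq_span_inter_orthant :: "nat \<Rightarrow> nat \<Rightarrow> (nat \<Rightarrow> nat \<Rightarrow> real) \<Rightarrow> bool" where
  "cone_eq_span_inter_orthant p q m \<longleftrightarrow> (\<forall>y. (\<forall>j<q. 0 \<le> (\<Sum>i<p. y i * m i j)) \<longrightarrow>
     (\<exists>c. (\<forall>i<p. 0 \<le> c i) \<and> (\<forall>j<q. (\<Sum>i<p. c i * m i j) = (\<Sum>i<p. y i * m i j))))"

lemma cone_eq_span_inter_orthant_cong:
  assumes "\<And>i j. i < p \<Longrightarrow> j < q \<Longrightarrow> m i j = m' i j"
  shows "cone_eq_span_inter_orthant p q m \<longleftrightarrow> cone_eq_span_inter_orthant p q m'"
proof -
  have "(\<Sum>i<p. y i * m i j) = (\<Sum>i<p. y i * m' i j)" if "j < q" for y j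
    using assms that by (intro sum.cong) auto
  then show ?thesis
    unfolding cone_eq_span_inter_orthant_def by simp
qed

locale polytope_slack =
  fixes p q n :: nat and v W :: "nat \<Rightarrow> nat \<Rightarrow> real" and w :: "nat \<Rightarrow> real"
  assumes conv_eq_polyhedron: "\<And>x. in_conv_rows p n v x \<longleftrightarrow> in_polyhedron q n W w x"
    and two_points: "\<exists>x y. in_conv_rows p n v x \<and> in_conv_rows p n v y \<and> (\<exists>l<n. x l \<noteq> y l)"
begin

definition slack :: "nat \<Rightarrow> nat \<Rightarrow> real" where
  "slack i j = w j - (\<Sum>l<n. W j l * v i l)"

lemma recession_cone_trivial:
  assumes d: "\<forall>j<q. (\<Sum>l<n. W j l * d l) \<le> 0" and l: "l < n"
  shows "d l = 0"
proof (rule ccontr)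
  assume "d l \<noteq> 0"
  obtain x0 where x0: "in_conv_rows p n v x0"
    using two_points by blast
  define t where "t = ((\<Sum>i<p. \<bar>v i l\<bar>) + \<bar>x0 l\<bar> + 1) / \<bar>d l\<bar>"
  have t: "0 \<le> t" "t * \<bar>d l\<bar> = (\<Sum>i<p. \<bar>v i l\<bar>) + \<bar>x0 l\<bar> + 1"
    using \<open>d l \<noteq> 0\<close> by (auto simp: t_def intro!: divide_nonneg_pos add_nonneg_nonneg sum_nonneg)
  have "in_polyhedron q n W w (\<lambda>l. x0 l + t * d l)"
    unfolding in_polyhedron_def
  proof (intro allI impI)
    fix j assume "j < q"
    have "(\<Sum>l<n. W j l * (x0 l + t * d l)) = (\<Sum>l<n. W j l * x0 l) + t * (\<Sum>l<n. W j l * d l)"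
      by (simp add: algebra_simps sum.distrib sum_distrib_left)
    also have "\<dots> \<le> w j + t * 0"
      using x0 conv_eq_polyhedron d t(1) \<open>j < q\<close> unfolding in_polyhedron_def
      by (intro add_mono mult_left_mono) auto
    finally show "(\<Sum>l<n. W j l * (x0 l + t * d l)) \<le> w j" by simp
  qed
  then have "\<bar>x0 l + t * d l\<bar> \<le> (\<Sum>i<p. \<bar>v i l\<bar>)"
    using in_conv_rows_abs_le[OF _ l] conv_eq_polyhedron by blast
  moreover have "t * \<bar>d l\<bar> \<le> \<bar>x0 l + t * d l\<bar> + \<bar>x0 l\<bar>"
    using t(1) abs_triangle_ineq4[of "x0 l + t * d l" "x0 l"] by (simp add: abs_mult)
  ultimately show False
    using t(2) by linarith
qed

lemma no_point_above: "\<not> (\<exists>y. \<forall>j<q. w j \<le> (\<Sum>l<n. W j l * y l))"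
proof
  assume "\<exists>y. \<forall>j<q. w j \<le> (\<Sum>l<n. W j l * y l)"
  then obtain y where y: "\<forall>j<q. w j \<le> (\<Sum>l<n. W j l * y l)" ..
  have "x l = y l" if "in_conv_rows p n v x" "l < n" for x l
  proof -
    have "\<forall>j<q. (\<Sum>l<n. W j l * (x l - y l)) \<le> 0"
      using that(1) conv_eq_polyhedron y unfolding in_polyhedron_def
      by (auto simp: algebra_simps sum_subtractf intro: order_trans)
    from recession_cone_trivial[OF this that(2)] show ?thesis by simp
  qed
  then show False
    using two_points by metis
qed

lemma slack_row_comb:
  "(\<Sum>i<p. c i * slack i j) = (\<Sum>i<p. c i) * w j - (\<Sum>l<n. W j l * (\<Sum>i<p. c i * v i l))"
proof -
  have "(\<Sum>i<p. c i * (\<Sum>l<n. W j l * v i l)) = (\<Sum>l<n. W j l * (\<Sum>i<p. c i * v i l))"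
    by (simp add: sum_distrib_left algebra_simps) (rule sum.swap)
  moreover have "(\<Sum>i<p. c i * w j) = (\<Sum>i<p. c i) * w j"
    by (simp add: sum_distrib_right)
  ultimately show ?thesis
    by (simp add: slack_def right_diff_distrib sum_subtractf)
qed

lemma slack_col_comb:
  "(\<Sum>j<q. z j * slack i j) = (\<Sum>j<q. z j * w j) - (\<Sum>l<n. (\<Sum>j<q. z j * W j l) * v i l)"
proof -
  have "(\<Sum>j<q. z j * (\<Sum>l<n. W j l * v i l)) = (\<Sum>l<n. (\<Sum>j<q. z j * W j l) * v i l)"
    by (simp add: sum_distrib_left sum_distrib_right algebra_simps) (rule sum.swap)
  then show ?thesis
    by (simp add: slack_def algebra_simps sum_subtractf)
qed

lemma ones_in_slack_col_cone: "\<exists>z. (\<forall>j<q. 0 \<le> z j) \<and> (\<forall>i<p. (\<Sum>j<q. z j * slack i j) = 1)"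
proof -
  obtain \<mu> where \<mu>: "\<forall>j<q. 0 \<le> \<mu> j" "\<forall>l<n. (\<Sum>j<q. \<mu> j * W j l) = 0" "0 < (\<Sum>j<q. \<mu> j * w j)"
    using farkas_lemma[where G=W and h=w and m=q and n=n] no_point_above by blast
  define \<sigma> where "\<sigma> = (\<Sum>j<q. \<mu> j * w j)"
  have "(\<Sum>j<q. \<mu> j / \<sigma> * slack i j) = 1" for i
    using \<mu>(2,3) unfolding slack_col_comb
    by (simp add: \<sigma>_def sum_divide_distrib[symmetric])
  then show ?thesis
    using \<mu>(1,3) by (intro exI[of _ "\<lambda>j. \<mu> j / \<sigma>"]) (simp add: \<sigma>_def)
qed

lemma slack_row_comb_of_point:
  assumes "in_conv_rows p n v x" "0 \<le> s"
  shows "\<exists>c. (\<forall>i<p. 0 \<le> c i) \<and> (\<forall>j<q. (\<Sum>i<p. c i * slack i j) = s * w j - (\<Sum>l<n. W j l * (s * x l)))"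
proof -
  obtain a where a: "\<forall>i<p. 0 \<le> a i" "(\<Sum>i<p. a i) = 1" "\<forall>l<n. x l = (\<Sum>i<p. a i * v i l)"
    using assms(1) unfolding in_conv_rows_def by blast
  have "(\<Sum>i<p. s * a i * slack i j) = s * w j - (\<Sum>l<n. W j l * (s * x l))" for j
    using a(2,3) unfolding slack_row_comb
    by (simp add: sum_distrib_left[symmetric] mult.assoc)
  then show ?thesis
    using a(1) assms(2) by (intro exI[of _ "\<lambda>i. s * a i"]) simp
qed

lemma slack_row_cone: "cone_eq_span_inter_orthant p q slack"
  unfolding cone_eq_span_inter_orthant_def
proof (intro allI impI)
  fix y assume y: "\<forall>j<q. 0 \<le> (\<Sum>i<p. y i * slack i j)"
  define s u where "s = (\<Sum>i<p. y i)" and "u l = (\<Sum>i<p. y i * v i l)" for l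
  have yS: "(\<Sum>i<p. y i * slack i j) = s * w j - (\<Sum>l<n. W j l * u l)" for j
    unfolding s_def u_def by (rule slack_row_comb)
  have Wu: "(\<Sum>l<n. W j l * (u l / s)) = (\<Sum>l<n. W j l * u l) / s" for j
    by (simp add: sum_divide_distrib)
  consider "0 < s" | "s = 0" | "s < 0" by linarith
  then show "\<exists>c. (\<forall>i<p. 0 \<le> c i) \<and> (\<forall>j<q. (\<Sum>i<p. c i * slack i j) = (\<Sum>i<p. y i * slack i j))"
  proof cases
    case 1
    then have "in_polyhedron q n W w (\<lambda>l. u l / s)"
      using y unfolding in_polyhedron_def Wu yS by (simp add: pos_divide_le_eq mult.commute)
    then have "in_conv_rows p n v (\<lambda>l. u l / s)"
      using conv_eq_polyhedron by blast
    with 1 obtain c where c: "\<forall>i<p. 0 \<le> c i"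
      "\<forall>j<q. (\<Sum>i<p. c i * slack i j) = s * w j - (\<Sum>l<n. W j l * (s * (u l / s)))"
      using slack_row_comb_of_point[of "\<lambda>l. u l / s" s] by auto
    have "s * (u l / s) = u l" for l
      using 1 by simp
    then have "\<forall>j<q. (\<Sum>i<p. c i * slack i j) = (\<Sum>i<p. y i * slack i j)"
      using c(2) yS by simp
    then show ?thesis
      using c(1) by blast
  next
    case 2
    then have "u l = 0" if "l < n" for l
      using y that by (intro recession_cone_trivial) (auto simp: yS)
    then show ?thesis
      using 2 by (intro exI[of _ "\<lambda>_. 0"]) (simp add: yS)
  next
    case 3
    then have "\<forall>j<q. w j \<le> (\<Sum>l<n. W j l * (u l / s))"
      using y unfolding Wu yS by (simp add: neg_le_divide_eq mult.commute)
    then have "\<exists>y. \<forall>j<q. w j \<le> (\<Sum>l<n. W j l * y l)"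
      by (rule exI[where x="\<lambda>l. u l / s"])
    with no_point_above show ?thesis by contradiction
  qed
qed

lemma slack_col_cone: "cone_eq_span_inter_orthant q p (\<lambda>j i. slack i j)"
  unfolding cone_eq_span_inter_orthant_def
proof (intro allI impI)
  fix z assume z: "\<forall>i<p. 0 \<le> (\<Sum>j<q. z j * slack i j)"
  define c g where "c = (\<Sum>j<q. z j * w j)" and "g l = (\<Sum>j<q. z j * W j l)" for l
  have zS: "(\<Sum>j<q. z j * slack i j) = c - (\<Sum>l<n. g l * v i l)" for i
    unfolding c_def g_def by (rule slack_col_comb)
  have valid: "(\<Sum>l<n. g l * x l) \<le> c" if "in_polyhedron q n W w x" for x
    using that z conv_eq_polyhedron in_conv_rows_linear_le[of p n v x g c] by (simp add: zS)
  obtain x0 where "in_polyhedron q n W w x0"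
    using two_points conv_eq_polyhedron by blast
  from affine_farkas[OF this valid] obtain \<mu> where
    \<mu>: "\<forall>j<q. 0 \<le> \<mu> j" "\<forall>l<n. (\<Sum>j<q. \<mu> j * W j l) = g l" "(\<Sum>j<q. \<mu> j * w j) \<le> c"
    by blast
  obtain z1 where z1: "\<forall>j<q. 0 \<le> z1 j" "\<forall>i<p. (\<Sum>j<q. z1 j * slack i j) = 1"
    using ones_in_slack_col_cone by blast
  define d where "d = c - (\<Sum>j<q. \<mu> j * w j)"
  have "(\<Sum>j<q. (\<mu> j + d * z1 j) * slack i j) = (\<Sum>j<q. z j * slack i j)" if "i < p" for i
  proof -
    have "(\<Sum>j<q. (\<mu> j + d * z1 j) * slack i j)
        = (\<Sum>j<q. \<mu> j * slack i j) + d * (\<Sum>j<q. z1 j * slack i j)"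
      by (simp add: distrib_right sum.distrib sum_distrib_left mult.assoc)
    also have "(\<Sum>j<q. \<mu> j * slack i j) = (\<Sum>j<q. \<mu> j * w j) - (\<Sum>l<n. g l * v i l)"
      unfolding slack_col_comb by (intro arg_cong2[where f=minus] refl sum.cong) (simp_all add: \<mu>(2))
    finally show ?thesis
      using z1(2) that by (simp add: zS d_def)
  qed
  moreover have "\<forall>j<q. 0 \<le> \<mu> j + d * z1 j"
    using \<mu>(1,3) z1(1) by (simp add: d_def)
  ultimately show "\<exists>\<zeta>. (\<forall>j<q. 0 \<le> \<zeta> j) \<and> (\<forall>i<p. (\<Sum>j<q. \<zeta> j * slack i j) = (\<Sum>j<q. z j * slack i j))"
    by (intro exI[of _ "\<lambda>j. \<mu> j + d * z1 j"]) simp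
qed

end

section \<open>A polytope with a prescribed slack matrix\<close>

text \<open>
  The candidate polytope is the convex hull of the rows of \<open>C\<close>, and the candidate inequalities are
  \<open>m 0 j + (\<Sum>l<k. D l j * x l) \<ge> 0\<close>.
\<close>

locale centered_factorization =
  fixes p q k :: nat and m C D :: "nat \<Rightarrow> nat \<Rightarrow> real" and z0 :: "nat \<Rightarrow> real"
  assumes p_pos: "0 < p"
    and nonneg: "\<And>i j. i < p \<Longrightarrow> j < q \<Longrightarrow> 0 \<le> m i j"
    and ones: "\<And>i. i < p \<Longrightarrow> (\<Sum>j<q. m i j * z0 j) = 1"
    and factor: "\<And>i j. i < p \<Longrightarrow> j < q \<Longrightarrow> m i j - m 0 j = (\<Sum>l<k. C i l * D l j)"
    and C_span: "rows_span p k C"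
    and D_span: "rows_span q k (\<lambda>j l. D l j)"
begin

lemma row_comb:
  assumes "j < q"
  shows "(\<Sum>i<p. c i * m i j) = (\<Sum>i<p. c i) * m 0 j + (\<Sum>l<k. D l j * (\<Sum>i<p. c i * C i l))"
proof -
  have "(\<Sum>i<p. c i * (m i j - m 0 j)) = (\<Sum>i<p. c i * (\<Sum>l<k. C i l * D l j))"
    using factor assms by (intro sum.cong) simp_all
  also have "\<dots> = (\<Sum>l<k. D l j * (\<Sum>i<p. c i * C i l))"
    by (simp add: sum_distrib_left algebra_simps) (rule sum.swap)
  finally have "(\<Sum>i<p. c i * (m i j - m 0 j)) = (\<Sum>l<k. D l j * (\<Sum>i<p. c i * C i l))" .
  moreover have "(\<Sum>i<p. c i * m 0 j) = (\<Sum>i<p. c i) * m 0 j"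
    by (simp add: sum_distrib_right)
  ultimately show ?thesis
    by (simp add: right_diff_distrib sum_subtractf)
qed

lemma col_comb:
  assumes "i < p"
  shows "(\<Sum>j<q. m i j * z j) = (\<Sum>j<q. m 0 j * z j) + (\<Sum>l<k. C i l * (\<Sum>j<q. D l j * z j))"
proof -
  have "(\<Sum>j<q. (m i j - m 0 j) * z j) = (\<Sum>j<q. (\<Sum>l<k. C i l * D l j) * z j)"
    using factor assms by (intro sum.cong) simp_all
  also have "\<dots> = (\<Sum>l<k. C i l * (\<Sum>j<q. D l j * z j))"
    by (simp add: sum_distrib_left sum_distrib_right mult.assoc) (rule sum.swap)
  finally have "(\<Sum>j<q. (m i j - m 0 j) * z j) = (\<Sum>l<k. C i l * (\<Sum>j<q. D l j * z j))" .
  then show ?thesis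
    by (simp add: algebra_simps sum_subtractf)
qed

lemma C_row0_eq_0: "\<forall>l<k. C 0 l = 0"
proof (rule rows_span_orthogonal_eq_0[OF D_span], intro allI impI)
  fix j assume "j < q"
  have "(\<Sum>l<k. D l j * C 0 l) = (\<Sum>l<k. C 0 l * D l j)"
    by (simp add: mult.commute)
  also have "\<dots> = 0"
    using factor[OF p_pos \<open>j < q\<close>] by simp
  finally show "(\<Sum>l<k. D l j * C 0 l) = 0" .
qed

lemma D_z0_eq_0: "\<forall>l<k. (\<Sum>j<q. D l j * z0 j) = 0"
proof (rule rows_span_orthogonal_eq_0[OF C_span], intro allI impI)
  fix i assume "i < p"
  show "(\<Sum>l<k. C i l * (\<Sum>j<q. D l j * z0 j)) = 0"
    using col_comb[OF \<open>i < p\<close>, of z0] ones[OF \<open>i < p\<close>] ones[OF p_pos] by simp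
qed

lemma row_comb_eq_0:
  assumes "\<forall>j<q. (\<Sum>i<p. c i * m i j) = 0"
  shows "(\<Sum>i<p. c i) = 0" "\<forall>l<k. (\<Sum>i<p. c i * C i l) = 0"
proof -
  define s u where "s = (\<Sum>i<p. c i)" and "u l = (\<Sum>i<p. c i * C i l)" for l
  have rel: "s * m 0 j + (\<Sum>l<k. D l j * u l) = 0" if "j < q" for j
    using assms row_comb[OF that, of c] that by (simp add: s_def u_def)
  have "0 = (\<Sum>j<q. (s * m 0 j + (\<Sum>l<k. D l j * u l)) * z0 j)"
    using rel by simp
  also have "\<dots> = s * (\<Sum>j<q. m 0 j * z0 j) + (\<Sum>l<k. u l * (\<Sum>j<q. D l j * z0 j))"
    by (simp add: algebra_simps sum.distrib sum_distrib_left sum_distrib_right) (rule sum.swap)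
  also have "\<dots> = s"
    using ones[OF p_pos] D_z0_eq_0 by simp
  finally have "s = 0" ..
  then show "(\<Sum>i<p. c i) = 0"
    by (simp add: s_def)
  have "\<forall>j<q. (\<Sum>l<k. D l j * u l) = 0"
    using rel \<open>s = 0\<close> by simp
  from rows_span_orthogonal_eq_0[OF D_span this]
  show "\<forall>l<k. (\<Sum>i<p. c i * C i l) = 0"
    by (simp add: u_def)
qed

lemma col_comb_eq_0:
  assumes "\<forall>i<p. (\<Sum>j<q. m i j * z j) = 0"
  shows "(\<Sum>j<q. m 0 j * z j) = 0" "\<forall>l<k. (\<Sum>j<q. D l j * z j) = 0"
proof -
  show m0: "(\<Sum>j<q. m 0 j * z j) = 0"
    using assms p_pos by simp
  have "(\<Sum>l<k. C i l * (\<Sum>j<q. D l j * z j)) = 0" if "i < p" for i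
    using col_comb[OF that, of z] assms that m0 by simp
  then have "\<forall>i<p. (\<Sum>l<k. C i l * (\<Sum>j<q. D l j * z j)) = 0"
    by blast
  from rows_span_orthogonal_eq_0[OF C_span this]
  show "\<forall>l<k. (\<Sum>j<q. D l j * z j) = 0" .
qed

lemma exists_affine_coords: "\<exists>c. (\<Sum>i<p. c i) = 1 \<and> (\<forall>l<k. (\<Sum>i<p. c i * C i l) = x l)"
proof -
  obtain y where y: "\<forall>l<k. (\<Sum>i<p. y i * C i l) = x l"
    using C_span unfolding rows_span_def by (elim allE[of _ x]) blast
  define c where "c i = y i + (if i = 0 then 1 - (\<Sum>i<p. y i) else 0)" for i
  have "(\<Sum>i<p. c i * f i) = (\<Sum>i<p. y i * f i) + (1 - (\<Sum>i<p. y i)) * f 0" for f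
  proof -
    have "(\<Sum>i<p. c i * f i) = (\<Sum>i<p. y i * f i + (if i = 0 then (1 - (\<Sum>i<p. y i)) * f i else 0))"
      unfolding c_def by (intro sum.cong) (auto simp: algebra_simps)
    then show ?thesis
      using p_pos by (simp add: sum.distrib)
  qed
  from this[of "\<lambda>_. 1"] this[of "\<lambda>i. C i _"] have "(\<Sum>i<p. c i) = 1" "\<forall>l<k. (\<Sum>i<p. c i * C i l) = x l"
    using y C_row0_eq_0 by simp_all
  then show ?thesis
    by blast
qed

lemma exists_col_coords: "\<exists>z. (\<Sum>j<q. m 0 j * z j) = s \<and> (\<forall>l<k. (\<Sum>j<q. D l j * z j) = u l)"
proof -
  obtain y where y: "\<forall>l<k. (\<Sum>j<q. y j * D l j) = u l"
    using D_span unfolding rows_span_def by (elim allE[of _ u]) blast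
  define d where "d = s - (\<Sum>j<q. m 0 j * y j)"
  have "(\<Sum>j<q. f j * (y j + d * z0 j)) = (\<Sum>j<q. f j * y j) + d * (\<Sum>j<q. f j * z0 j)" for f
    by (simp add: algebra_simps sum.distrib sum_distrib_left)
  from this[of "m 0"] this[of "\<lambda>j. D _ j"]
  have "(\<Sum>j<q. m 0 j * (y j + d * z0 j)) = s" "\<forall>l<k. (\<Sum>j<q. D l j * (y j + d * z0 j)) = u l"
    using y ones[OF p_pos] D_z0_eq_0 by (simp_all add: d_def mult.commute)
  then show ?thesis
    by (intro exI[of _ "\<lambda>j. y j + d * z0 j"]) simp
qed

lemma in_polyhedron_iff_slack_nonneg:
  "in_polyhedron q k (\<lambda>j l. - D l j) (m 0) x \<longleftrightarrow> (\<forall>j<q. 0 \<le> m 0 j + (\<Sum>l<k. D l j * x l))"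
  by (auto simp: in_polyhedron_def sum_negf)

lemma conv_subset_polyhedron:
  assumes "in_conv_rows p k C x"
  shows "in_polyhedron q k (\<lambda>j l. - D l j) (m 0) x"
  unfolding in_polyhedron_def
proof (intro allI impI)
  fix j assume "j < q"
  have "(\<Sum>l<k. - D l j * C i l) \<le> m 0 j" if "i < p" for i
    using factor[OF that \<open>j < q\<close>] nonneg[OF that \<open>j < q\<close>]
    by (simp add: sum_negf mult.commute)
  then show "(\<Sum>l<k. - D l j * x l) \<le> m 0 j"
    using in_conv_rows_linear_le[OF assms, of "\<lambda>l. - D l j" "m 0 j"] by blast
qed

lemma polyhedron_subset_conv_of_row_cone:
  assumes cone: "cone_eq_span_inter_orthant p q m" and x: "in_polyhedron q k (\<lambda>j l. - D l j) (m 0) x"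
  shows "in_conv_rows p k C x"
proof -
  obtain c where c: "(\<Sum>i<p. c i) = 1" "\<forall>l<k. (\<Sum>i<p. c i * C i l) = x l"
    using exists_affine_coords[of x] by blast
  have "(\<Sum>i<p. c i * m i j) = m 0 j + (\<Sum>l<k. D l j * x l)" if "j < q" for j
    using row_comb[OF that, of c] c by simp
  then have "\<forall>j<q. 0 \<le> (\<Sum>i<p. c i * m i j)"
    using x unfolding in_polyhedron_iff_slack_nonneg by simp
  then obtain c' where c': "\<forall>i<p. 0 \<le> c' i" "\<forall>j<q. (\<Sum>i<p. c' i * m i j) = (\<Sum>i<p. c i * m i j)"
    using cone unfolding cone_eq_span_inter_orthant_def by blast
  then have "\<forall>j<q. (\<Sum>i<p. (c' i - c i) * m i j) = 0"
    by (simp add: left_diff_distrib sum_subtractf)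
  from row_comb_eq_0[OF this] have "(\<Sum>i<p. c' i) = 1" "\<forall>l<k. x l = (\<Sum>i<p. c' i * C i l)"
    using c by (simp_all add: left_diff_distrib sum_subtractf)
  then show ?thesis
    using c'(1) unfolding in_conv_rows_def by blast
qed

lemma polyhedron_subset_conv_of_col_cone:
  assumes cone: "cone_eq_span_inter_orthant q p (\<lambda>j i. m i j)"
    and x: "in_polyhedron q k (\<lambda>j l. - D l j) (m 0) x"
  shows "in_conv_rows p k C x"
proof (rule ccontr)
  assume "\<not> in_conv_rows p k C x"
  then obtain y s where y: "\<forall>i<p. (\<Sum>l<k. C i l * y l) \<le> s" "s < (\<Sum>l<k. x l * y l)"
    using separate_point_from_conv_rows by blast
  obtain z where z: "(\<Sum>j<q. m 0 j * z j) = s" "\<forall>l<k. (\<Sum>j<q. D l j * z j) = - y l"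
    using exists_col_coords[of s "\<lambda>l. - y l"] by blast
  have mz: "(\<Sum>j<q. z j * m i j) = s - (\<Sum>l<k. C i l * y l)" if "i < p" for i
    using col_comb[OF that, of z] z by (simp add: mult.commute sum_negf)
  then have "\<forall>i<p. 0 \<le> (\<Sum>j<q. z j * m i j)"
    using y(1) by simp
  then obtain \<zeta> where \<zeta>: "\<forall>j<q. 0 \<le> \<zeta> j" "\<forall>i<p. (\<Sum>j<q. \<zeta> j * m i j) = (\<Sum>j<q. z j * m i j)"
    using cone unfolding cone_eq_span_inter_orthant_def by blast
  then have "\<forall>i<p. (\<Sum>j<q. m i j * (\<zeta> j - z j)) = 0"
    by (simp add: right_diff_distrib sum_subtractf mult.commute)
  from col_comb_eq_0[OF this] have "(\<Sum>j<q. m 0 j * \<zeta> j) = s" "\<forall>l<k. (\<Sum>j<q. D l j * \<zeta> j) = - y l"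
    using z by (simp_all add: right_diff_distrib sum_subtractf eq_neg_iff_add_eq_0)
  have "0 \<le> (\<Sum>j<q. \<zeta> j * (m 0 j + (\<Sum>l<k. D l j * x l)))"
    using \<zeta>(1) x unfolding in_polyhedron_iff_slack_nonneg by (intro sum_nonneg) simp
  also have "\<dots> = (\<Sum>j<q. m 0 j * \<zeta> j) + (\<Sum>l<k. x l * (\<Sum>j<q. D l j * \<zeta> j))"
    by (simp add: algebra_simps sum.distrib sum_distrib_left) (rule sum.swap)
  also have "\<dots> = s - (\<Sum>l<k. x l * y l)"
    using \<open>(\<Sum>j<q. m 0 j * \<zeta> j) = s\<close> \<open>\<forall>l<k. (\<Sum>j<q. D l j * \<zeta> j) = - y l\<close> by (simp add: sum_negf)
  finally show False
    using y(2) by simp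
qed

lemma two_distinct_points:
  assumes "i < p" "j < q" "m i j \<noteq> m 0 j"
  shows "\<exists>x y. in_conv_rows p k C x \<and> in_conv_rows p k C y \<and> (\<exists>l<k. x l \<noteq> y l)"
proof -
  have "(\<Sum>l<k. C i l * D l j) \<noteq> 0"
    using factor[OF assms(1,2)] assms(3) by simp
  then obtain l where "l < k" "C i l \<noteq> C 0 l"
    using C_row0_eq_0 by (metis (no_types, lifting) lessThan_iff mult_eq_0_iff sum.neutral)
  then show ?thesis
    using in_conv_rows_row[OF assms(1)] in_conv_rows_row[OF p_pos] by blast
qed

lemma polytope_slack_of_cone_condition:
  assumes "cone_eq_span_inter_orthant p q m \<or> cone_eq_span_inter_orthant q p (\<lambda>j i. m i j)"
    and "i < p" "j < q" "m i j \<noteq> m 0 j"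
  shows "polytope_slack p q k C (\<lambda>j l. - D l j) (m 0)"
proof
  show "in_conv_rows p k C x \<longleftrightarrow> in_polyhedron q k (\<lambda>j l. - D l j) (m 0) x" for x
    using assms(1) conv_subset_polyhedron polyhedron_subset_conv_of_row_cone
      polyhedron_subset_conv_of_col_cone by blast
  show "\<exists>x y. in_conv_rows p k C x \<and> in_conv_rows p k C y \<and> (\<exists>l<k. x l \<noteq> y l)"
    using two_distinct_points assms(2-4) by blast
qed

lemma entry_eq_slack:
  assumes "i < p" "j < q"
  shows "m i j = m 0 j - (\<Sum>l<k. - D l j * C i l)"
  using factor[OF assms] by (simp add: sum_negf mult.commute)

end

section \<open>Translation to vectors and matrices\<close>

lemma mult_mat_vec_index_sum:
  fixes M :: "real mat"
  assumes "M \<in> carrier_mat p q" "z \<in> carrier_vec q" "i < p"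
  shows "(M *\<^sub>v z) $ i = (\<Sum>j<q. M $$ (i, j) * z $ j)"
  using assms by (simp add: scalar_prod_def lessThan_atLeast0)

lemma transpose_mult_mat_vec_index_sum:
  fixes M :: "real mat"
  assumes "M \<in> carrier_mat p q" "x \<in> carrier_vec p" "j < q"
  shows "(transpose_mat M *\<^sub>v x) $ j = (\<Sum>i<p. x $ i * M $$ (i, j))"
  using assms by (simp add: scalar_prod_def lessThan_atLeast0 mult.commute)

lemma sum_list_vec: "sum_list (list_of_vec (c :: real vec)) = (\<Sum>i<dim_vec c. c $ i)"
  by (simp add: list_of_vec_map sum_set_upt_conv_sum_list_nat[symmetric] lessThan_atLeast0)

lemma in_conv_rows_vec: "in_conv_rows p n v (\<lambda>l. vec n x $ l) \<longleftrightarrow> in_conv_rows p n v x"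
  by (simp add: in_conv_rows_def)

lemma in_polyhedron_vec: "in_polyhedron q n W w (\<lambda>l. vec n x $ l) \<longleftrightarrow> in_polyhedron q n W w x"
proof -
  have "(\<Sum>l<n. W j l * vec n x $ l) = (\<Sum>l<n. W j l * x l)" for j
    by (intro sum.cong) auto
  then show ?thesis
    by (simp add: in_polyhedron_def)
qed

lemma conv_rows_iff:
  assumes V: "V \<in> carrier_mat p n"
  shows "y \<in> conv_rows V \<longleftrightarrow> y \<in> carrier_vec n \<and> in_conv_rows p n (\<lambda>i l. V $$ (i, l)) (\<lambda>l. y $ l)"
proof
  assume "y \<in> conv_rows V"
  then obtain c where c: "c \<in> carrier_vec p" "nonneg_vec c" "sum_list (list_of_vec c) = 1"
    "y = transpose_mat V *\<^sub>v c"
    using V unfolding conv_rows_def by auto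
  then have "y \<in> carrier_vec n"
    using V by simp
  moreover have "in_conv_rows p n (\<lambda>i l. V $$ (i, l)) (\<lambda>l. y $ l)"
    unfolding in_conv_rows_def
    using c V transpose_mult_mat_vec_index_sum[OF V c(1)]
    by (intro exI[of _ "\<lambda>i. c $ i"]) (auto simp: nonneg_vec_def sum_list_vec)
  ultimately show "y \<in> carrier_vec n \<and> in_conv_rows p n (\<lambda>i l. V $$ (i, l)) (\<lambda>l. y $ l)" ..
next
  assume y: "y \<in> carrier_vec n \<and> in_conv_rows p n (\<lambda>i l. V $$ (i, l)) (\<lambda>l. y $ l)"
  then obtain c where c: "\<forall>i<p. 0 \<le> c i" "(\<Sum>i<p. c i) = 1" "\<forall>l<n. y $ l = (\<Sum>i<p. c i * V $$ (i, l))"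
    unfolding in_conv_rows_def by blast
  have "y = transpose_mat V *\<^sub>v vec p c"
    using y c(3) V transpose_mult_mat_vec_index_sum[OF V, of "vec p c"] by (intro eq_vecI) auto
  moreover have "nonneg_vec (vec p c)" "sum_list (list_of_vec (vec p c)) = 1"
    using c(1,2) by (simp_all add: nonneg_vec_def sum_set_upt_conv_sum_list_nat[symmetric] lessThan_atLeast0)
  ultimately show "y \<in> conv_rows V"
    using V unfolding conv_rows_def by (intro CollectI bexI[of _ "vec p c"]) auto
qed

lemma polyhedron_iff:
  assumes W: "W \<in> carrier_mat q n"
  shows "y \<in> polyhedron W w \<longleftrightarrow>
    y \<in> carrier_vec n \<and> in_polyhedron q n (\<lambda>j l. W $$ (j, l)) (\<lambda>j. w $ j) (\<lambda>l. y $ l)"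
  using W by (auto simp: polyhedron_def in_polyhedron_def scalar_prod_def lessThan_atLeast0)

lemma conv_rows_mat_iff:
  "y \<in> conv_rows (mat p n (\<lambda>(i, l). v i l)) \<longleftrightarrow> y \<in> carrier_vec n \<and> in_conv_rows p n v (\<lambda>l. y $ l)"
proof -
  have "(\<Sum>i<p. c i * mat p n (\<lambda>(i, l). v i l) $$ (i, l)) = (\<Sum>i<p. c i * v i l)" if "l < n" for c l
    using that by (intro sum.cong) auto
  then show ?thesis
    unfolding conv_rows_iff[OF mat_carrier] in_conv_rows_def by simp
qed

lemma polyhedron_mat_iff:
  "y \<in> polyhedron (mat q n (\<lambda>(j, l). W j l)) (vec q w) \<longleftrightarrow> y \<in> carrier_vec n \<and> in_polyhedron q n W w (\<lambda>l. y $ l)"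
proof -
  have "(\<Sum>l<n. mat q n (\<lambda>(j, l). W j l) $$ (j, l) * x l) = (\<Sum>l<n. W j l * x l)" if "j < q" for j x
    using that by (intro sum.cong) auto
  then show ?thesis
    unfolding polyhedron_iff[OF mat_carrier] in_polyhedron_def by simp
qed

lemma scalar_prod_vec: "vec n f \<bullet> vec n g = (\<Sum>l<n. f l * g l)"
  by (simp add: scalar_prod_def lessThan_atLeast0)

lemma polytope_slack_of_slack_matrix:
  assumes M: "M \<in> carrier_mat p q" and "is_slack_matrix M"
  shows "\<exists>n v W w. polytope_slack p q n v W w \<and> (\<forall>i<p. \<forall>j<q. M $$ (i, j) = w j - (\<Sum>l<n. W j l * v i l))"
proof -
  obtain n V W w where V: "V \<in> carrier_mat p n" and W: "W \<in> carrier_mat q n" and "w \<in> carrier_vec q"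
    and PQ: "conv_rows V = polyhedron W w" and dim: "dim_ge_1 (conv_rows V)"
    and M_eq: "M = mat p q (\<lambda>(i, j). w $ j - row W j \<bullet> row V i)"
    using assms unfolding is_slack_matrix_def by auto
  define v W' w' where "v = (\<lambda>i l. V $$ (i, l))" and "W' = (\<lambda>j l. W $$ (j, l))" and "w' = (\<lambda>j. w $ j)"
  have "in_conv_rows p n v x \<longleftrightarrow> in_polyhedron q n W' w' x" for x
  proof -
    have "in_conv_rows p n v x \<longleftrightarrow> vec n x \<in> conv_rows V"
      using conv_rows_iff[OF V, of "vec n x"] in_conv_rows_vec by (simp add: v_def)
    also have "\<dots> \<longleftrightarrow> in_polyhedron q n W' w' x"
      using polyhedron_iff[OF W, of "vec n x" w] PQ in_polyhedron_vec by (simp add: W'_def w'_def)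
    finally show ?thesis .
  qed
  moreover have "\<exists>x y. in_conv_rows p n v x \<and> in_conv_rows p n v y \<and> (\<exists>l<n. x l \<noteq> y l)"
  proof -
    obtain x y where xy: "x \<in> conv_rows V" "y \<in> conv_rows V" "x \<noteq> y"
      using dim unfolding dim_ge_1_def by blast
    then have "x \<in> carrier_vec n" "y \<in> carrier_vec n"
      using conv_rows_iff[OF V] by auto
    then obtain l where "l < n" "x $ l \<noteq> y $ l"
      using xy(3) by (metis carrier_vecD eq_vecI)
    then show ?thesis
      using xy(1,2) conv_rows_iff[OF V] unfolding v_def by blast
  qed
  moreover have "M $$ (i, j) = w' j - (\<Sum>l<n. W' j l * v i l)" if "i < p" "j < q" for i j
    using that V W by (simp add: M_eq v_def W'_def w'_def scalar_prod_def lessThan_atLeast0)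
  ultimately show ?thesis
    by (intro exI[of _ n] exI[of _ v] exI[of _ W'] exI[of _ w']) (simp add: polytope_slack_def)
qed

lemma slack_matrix_of_polytope_slack:
  assumes M: "M \<in> carrier_mat p q" and P: "polytope_slack p q n v W w"
    and entries: "\<forall>i<p. \<forall>j<q. M $$ (i, j) = w j - (\<Sum>l<n. W j l * v i l)"
  shows "is_slack_matrix M"
proof -
  define Vm Wm where "Vm = mat p n (\<lambda>(i, l). v i l)" and "Wm = mat q n (\<lambda>(j, l). W j l)"
  have "conv_rows Vm = polyhedron Wm (vec q w)"
    using polytope_slack.conv_eq_polyhedron[OF P]
    unfolding Vm_def Wm_def set_eq_iff conv_rows_mat_iff polyhedron_mat_iff by blast
  moreover have "dim_ge_1 (conv_rows Vm)"
  proof -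
    obtain x y l where "in_conv_rows p n v x" "in_conv_rows p n v y" "l < n" "x l \<noteq> y l"
      using polytope_slack.two_points[OF P] by blast
    then have "vec n x \<in> conv_rows Vm" "vec n y \<in> conv_rows Vm" "vec n x \<noteq> vec n y"
      unfolding Vm_def conv_rows_mat_iff in_conv_rows_vec by (auto simp: vec_eq_iff)
    then show ?thesis
      unfolding dim_ge_1_def by blast
  qed
  moreover have "M = mat p q (\<lambda>(i, j). vec q w $ j - row Wm j \<bullet> row Vm i)"
    using M entries by (intro eq_matI) (simp_all add: Vm_def Wm_def scalar_prod_vec)
  ultimately show ?thesis
    unfolding is_slack_matrix_def using M
    by (intro exI[of _ n] exI[of _ Vm] exI[of _ Wm] exI[of _ "vec q w"]) (simp add: Vm_def Wm_def)
qed

lemma cone_eq_span_inter_orthant_vec: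
  fixes M :: "real mat"
  assumes M: "M \<in> carrier_mat p q"
  shows "cone_eq_span_inter_orthant p q (\<lambda>i j. M $$ (i, j)) \<longleftrightarrow>
    (\<forall>x \<in> carrier_vec p. nonneg_vec (transpose_mat M *\<^sub>v x) \<longrightarrow>
      (\<exists>c \<in> carrier_vec p. nonneg_vec c \<and> transpose_mat M *\<^sub>v c = transpose_mat M *\<^sub>v x))"
proof -
  have index: "(transpose_mat M *\<^sub>v vec p y) $ j = (\<Sum>i<p. y i * M $$ (i, j))" if "j < q" for y j
    using transpose_mult_mat_vec_index_sum[OF M _ that, of "vec p y"] by simp
  have eq: "transpose_mat M *\<^sub>v vec p c = transpose_mat M *\<^sub>v vec p y \<longleftrightarrow>
      (\<forall>j<q. (\<Sum>i<p. c i * M $$ (i, j)) = (\<Sum>i<p. y i * M $$ (i, j)))" for c y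
    using M index by (auto simp: vec_eq_iff)
  have nonneg: "nonneg_vec (transpose_mat M *\<^sub>v vec p y) \<longleftrightarrow> (\<forall>j<q. 0 \<le> (\<Sum>i<p. y i * M $$ (i, j)))" for y
    using M index by (simp add: nonneg_vec_def)
  have vec_forall: "(\<forall>x \<in> carrier_vec p. P x) \<longleftrightarrow> (\<forall>y. P (vec p y))" for P :: "real vec \<Rightarrow> bool"
  proof (intro iffI ballI allI)
    fix x :: "real vec" assume "\<forall>y. P (vec p y)" "x \<in> carrier_vec p"
    moreover have "x = vec p (\<lambda>i. x $ i)"
      using \<open>x \<in> carrier_vec p\<close> by (intro eq_vecI) auto
    ultimately show "P x"
      by metis
  qed simp
  have vec_exists: "(\<exists>c \<in> carrier_vec p. P c) \<longleftrightarrow> (\<exists>c. P (vec p c))" for P :: "real vec \<Rightarrow> bool"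
    using vec_forall[of "\<lambda>x. \<not> P x"] by blast
  show ?thesis
    unfolding cone_eq_span_inter_orthant_def vec_forall vec_exists eq nonneg
    by (simp add: nonneg_vec_def)
qed

lemma nonneg_row_combinations_iff:
  fixes M :: "real mat"
  assumes M: "M \<in> carrier_mat p q" and nonneg: "nonneg_mat M"
  shows "{transpose_mat M *\<^sub>v x | x. x \<in> carrier_vec p \<and> nonneg_vec x}
      = {transpose_mat M *\<^sub>v x | x. x \<in> carrier_vec p} \<inter> {y \<in> carrier_vec q. nonneg_vec y}
    \<longleftrightarrow> cone_eq_span_inter_orthant p q (\<lambda>i j. M $$ (i, j))"
    (is "?A = ?B \<longleftrightarrow> _")
proof -
  have carrier: "transpose_mat M *\<^sub>v x \<in> carrier_vec q" for x
    using M by (intro carrier_vecI) simp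
  have "nonneg_vec (transpose_mat M *\<^sub>v x)" if "x \<in> carrier_vec p" "nonneg_vec x" for x
    using that M nonneg transpose_mult_mat_vec_index_sum[OF M that(1)]
    by (auto simp: nonneg_vec_def nonneg_mat_def intro!: sum_nonneg)
  then have "?A \<subseteq> ?B"
    using carrier by blast
  moreover have "?B \<subseteq> ?A \<longleftrightarrow> (\<forall>x \<in> carrier_vec p. nonneg_vec (transpose_mat M *\<^sub>v x) \<longrightarrow>
      (\<exists>c \<in> carrier_vec p. nonneg_vec c \<and> transpose_mat M *\<^sub>v c = transpose_mat M *\<^sub>v x))"
  proof
    assume BA: "?B \<subseteq> ?A"
    show "\<forall>x \<in> carrier_vec p. nonneg_vec (transpose_mat M *\<^sub>v x) \<longrightarrow>
      (\<exists>c \<in> carrier_vec p. nonneg_vec c \<and> transpose_mat M *\<^sub>v c = transpose_mat M *\<^sub>v x)"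
    proof (intro ballI impI)
      fix x assume "x \<in> carrier_vec p" "nonneg_vec (transpose_mat M *\<^sub>v x)"
      then have "transpose_mat M *\<^sub>v x \<in> ?A"
        using BA carrier by blast
      then show "\<exists>c \<in> carrier_vec p. nonneg_vec c \<and> transpose_mat M *\<^sub>v c = transpose_mat M *\<^sub>v x"
        by auto
    qed
  next
    assume cone: "\<forall>x \<in> carrier_vec p. nonneg_vec (transpose_mat M *\<^sub>v x) \<longrightarrow>
      (\<exists>c \<in> carrier_vec p. nonneg_vec c \<and> transpose_mat M *\<^sub>v c = transpose_mat M *\<^sub>v x)"
    show "?B \<subseteq> ?A"
    proof
      fix y assume "y \<in> ?B"
      then obtain x where "x \<in> carrier_vec p" "y = transpose_mat M *\<^sub>v x" "nonneg_vec y"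
        by blast
      with cone obtain c where "c \<in> carrier_vec p" "nonneg_vec c" "transpose_mat M *\<^sub>v c = y"
        by blast
      then show "y \<in> ?A"
        by blast
    qed
  qed
  ultimately show ?thesis
    unfolding cone_eq_span_inter_orthant_vec[OF M] by blast
qed

lemma nonneg_col_combinations_iff:
  fixes M :: "real mat"
  assumes M: "M \<in> carrier_mat p q" and nonneg: "nonneg_mat M"
  shows "{M *\<^sub>v z | z. z \<in> carrier_vec q \<and> nonneg_vec z}
      = {M *\<^sub>v z | z. z \<in> carrier_vec q} \<inter> {y \<in> carrier_vec p. nonneg_vec y}
    \<longleftrightarrow> cone_eq_span_inter_orthant q p (\<lambda>j i. M $$ (i, j))"
proof -
  have "transpose_mat M \<in> carrier_mat q p" "nonneg_mat (transpose_mat M)"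
    using M nonneg by (auto simp: nonneg_mat_def)
  from nonneg_row_combinations_iff[OF this] show ?thesis
    using cone_eq_span_inter_orthant_cong[of q p "\<lambda>j i. transpose_mat M $$ (j, i)" "\<lambda>j i. M $$ (i, j)"] M
    by simp
qed

lemma ones_in_col_span_iff:
  fixes M :: "real mat"
  assumes M: "M \<in> carrier_mat p q"
  shows "(\<exists>z \<in> carrier_vec q. M *\<^sub>v z = vec p (\<lambda>_. 1)) \<longleftrightarrow> (\<exists>z. \<forall>i<p. (\<Sum>j<q. M $$ (i, j) * z j) = 1)"
proof
  assume "\<exists>z \<in> carrier_vec q. M *\<^sub>v z = vec p (\<lambda>_. 1)"
  then obtain z where "z \<in> carrier_vec q" "M *\<^sub>v z = vec p (\<lambda>_. 1)" ..
  then have "\<forall>i<p. (\<Sum>j<q. M $$ (i, j) * z $ j) = 1"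
    using mult_mat_vec_index_sum[OF M] by (metis index_vec)
  then show "\<exists>z. \<forall>i<p. (\<Sum>j<q. M $$ (i, j) * z j) = 1"
    by (rule exI[of _ "\<lambda>j. z $ j"])
next
  assume "\<exists>z. \<forall>i<p. (\<Sum>j<q. M $$ (i, j) * z j) = 1"
  then obtain z where "\<forall>i<p. (\<Sum>j<q. M $$ (i, j) * z j) = 1" ..
  then have "M *\<^sub>v vec q z = vec p (\<lambda>_. 1)"
    using M mult_mat_vec_index_sum[OF M, of "vec q z"] by (intro eq_vecI) auto
  then show "\<exists>z \<in> carrier_vec q. M *\<^sub>v z = vec p (\<lambda>_. 1)"
    by (intro bexI[of _ "vec q z"]) auto
qed

lemma slack_matrix_cone_conditions:
  assumes M: "M \<in> carrier_mat p q" and "is_slack_matrix M"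
  shows "cone_eq_span_inter_orthant p q (\<lambda>i j. M $$ (i, j))"
    and "cone_eq_span_inter_orthant q p (\<lambda>j i. M $$ (i, j))"
    and "\<exists>z. \<forall>i<p. (\<Sum>j<q. M $$ (i, j) * z j) = 1"
proof -
  obtain n v W w where "polytope_slack p q n v W w"
    and entries: "\<forall>i<p. \<forall>j<q. M $$ (i, j) = w j - (\<Sum>l<n. W j l * v i l)"
    using polytope_slack_of_slack_matrix[OF assms] by blast
  then interpret polytope_slack p q n v W w
    by simp
  have M_slack: "M $$ (i, j) = slack i j" if "i < p" "j < q" for i j
    using entries that by (simp add: slack_def)
  have "cone_eq_span_inter_orthant p q (\<lambda>i j. M $$ (i, j)) \<longleftrightarrow> cone_eq_span_inter_orthant p q slack"
    by (rule cone_eq_span_inter_orthant_cong) (simp add: M_slack)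
  then show "cone_eq_span_inter_orthant p q (\<lambda>i j. M $$ (i, j))"
    using slack_row_cone by simp
  have "cone_eq_span_inter_orthant q p (\<lambda>j i. M $$ (i, j))
      \<longleftrightarrow> cone_eq_span_inter_orthant q p (\<lambda>j i. slack i j)"
    by (rule cone_eq_span_inter_orthant_cong) (simp add: M_slack)
  then show "cone_eq_span_inter_orthant q p (\<lambda>j i. M $$ (i, j))"
    using slack_col_cone by simp
  obtain z where "\<forall>i<p. (\<Sum>j<q. z j * slack i j) = 1"
    using ones_in_slack_col_cone by blast
  then have "\<forall>i<p. (\<Sum>j<q. M $$ (i, j) * z j) = 1"
    using M_slack by (simp add: mult.commute)
  then show "\<exists>z. \<forall>i<p. (\<Sum>j<q. M $$ (i, j) * z j) = 1"
    by (rule exI[of _ z])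
qed

lemma rank_ge_2_imp_rows_differ:
  fixes M :: "real mat"
  assumes M: "M \<in> carrier_mat p q" and rank: "2 \<le> vec_space.rank p M"
  shows "\<exists>i<p. \<exists>j<q. M $$ (i, j) \<noteq> M $$ (0, j)"
proof (rule ccontr)
  assume "\<not> ?thesis"
  then have "M $$ (i, j) = 1 * M $$ (0, j)" if "i < dim_row M" "j < dim_col M" for i j
    using that M by (metis carrier_matD mult_1)
  then have "vec_space.rank p M \<le> 1"
    using vec_space.rank_le_1_product_entries[OF M, of "\<lambda>_. 1" "\<lambda>j. M $$ (0, j)"] by blast
  then show False
    using rank by simp
qed

lemma slack_matrix_of_cone_condition:
  fixes M :: "real mat"
  assumes M: "M \<in> carrier_mat p q" and nonneg: "nonneg_mat M" and rank: "2 \<le> vec_space.rank p M"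
    and ones: "\<exists>z. \<forall>i<p. (\<Sum>j<q. M $$ (i, j) * z j) = 1"
    and cone: "cone_eq_span_inter_orthant p q (\<lambda>i j. M $$ (i, j))
      \<or> cone_eq_span_inter_orthant q p (\<lambda>j i. M $$ (i, j))"
  shows "is_slack_matrix M"
proof -
  obtain i j where ij: "i < p" "j < q" "M $$ (i, j) \<noteq> M $$ (0, j)"
    using rank_ge_2_imp_rows_differ[OF M rank] by blast
  obtain z0 where z0: "\<forall>i<p. (\<Sum>j<q. M $$ (i, j) * z0 j) = 1"
    using ones by blast
  obtain k C D where "\<forall>i<p. \<forall>j<q. M $$ (i, j) - M $$ (0, j) = (\<Sum>l<k. C i l * D l j)"
    and "rows_span p k C" "rows_span q k (\<lambda>j l. D l j)"
    using rank_factorization[of p q "\<lambda>i j. M $$ (i, j) - M $$ (0, j)"] by blast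
  then interpret centered_factorization p q k "\<lambda>i j. M $$ (i, j)" C D z0
    using ij(1) nonneg M z0 by unfold_locales (auto simp: nonneg_mat_def)
  show ?thesis
    using slack_matrix_of_polytope_slack[OF M polytope_slack_of_cone_condition[OF cone ij]] entry_eq_slack by blast
qed

theorem corollary2p7:
  fixes M :: "real mat" and p q :: nat
  assumes "M \<in> carrier_mat p q"
    and "nonneg_mat M"
    and "vec_space.rank p M \<ge> 2"
  shows "(is_slack_matrix M \<longleftrightarrow>
            {transpose_mat M *\<^sub>v x | x. x \<in> carrier_vec p \<and> nonneg_vec x}
              = {transpose_mat M *\<^sub>v x | x. x \<in> carrier_vec p} \<inter> {y \<in> carrier_vec q. nonneg_vec y}
            \<and> (\<exists>z \<in> carrier_vec q. M *\<^sub>v z = vec p (\<lambda>_. 1)))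
       \<and> (is_slack_matrix M \<longleftrightarrow>
            {M *\<^sub>v z | z. z \<in> carrier_vec q \<and> nonneg_vec z}
              = {M *\<^sub>v z | z. z \<in> carrier_vec q} \<inter> {y \<in> carrier_vec p. nonneg_vec y}
            \<and> (\<exists>z \<in> carrier_vec q. M *\<^sub>v z = vec p (\<lambda>_. 1)))"
  unfolding nonneg_row_combinations_iff[OF assms(1,2)] nonneg_col_combinations_iff[OF assms(1,2)]
    ones_in_col_span_iff[OF assms(1)]
  using slack_matrix_cone_conditions[OF assms(1)] slack_matrix_of_cone_condition[OF assms]
  by blast

end
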